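(* Let $\nu\in\mathcal P_2(\mathbb R^d)$ and $\mathcal D\subset\mathcal P_2(\mathbb R^d)$. Consider the relaxed problem $$(\mathrm{R})\qquad \min_{\mu\in\mathcal D}\mathcal W_2^2(\mu,\nu)$$ and the self-consistent problem $$(\mathrm{S})\qquad \inf_{\mu\in\mathcal D}\ \inf_{\pi\in\mathcal M(\mu,\nu)}\int|x-y|^2\,d\pi(x,y).$$ Assume there exist a minimizer $\mu\in\mathcal D$ of $(\mathrm R)$ and an optimal coupling $\pi\in\Pi(\mu,\nu)$ for $\mathcal W_2^2(\mu,\nu)$ such that $(c_\pi)_\#\mu\in\mathcal D$. Then $(c_\pi)_\#\mu$ is optimal both for $(\mathrm R)$ and for $(\mathrm S)$ (in $(\mathrm S)$ together with the coupling $(\mathsf C_\pi)_\#\pi\in\mathcal M((c_\pi)_\#\mu,\nu)$), and the optimal values of $(\mathrm R)$ and $(\mathrm S)$ coincide.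
   Context: $\mathcal P_2(\mathbb R^d)$ is the set of Borel probability measures on $\mathbb R^d$ with finite second moment. $\Pi(\mu,\nu)$ is the set of couplings of $\mu,\nu$ and $\mathcal W_2^2(\mu,\nu)=\inf_{\pi\in\Pi(\mu,\nu)}\int|x-y|^2d\pi$. $\mathcal M(\mu,\nu)$ is the set of martingale couplings: laws $\pi=\mathcal L(X,Y)$ with $X\sim\mu$, $Y\sim\nu$ and $\mathbb E_\pi[Y\mid X]=X$. For $\pi\in\Pi(\mu,\nu)$ with disintegration $\pi=\mu\otimes\pi_x$ (i.e. $\pi(A\times B)=\int_A\pi_x(B)\,d\mu(x)$), the $\pi$-conditional barycentric map is $c_\pi(x)=\int y\,d\pi_x(y)$ ($\mu$-a.e.), and $\mathsf C_\pi(x,y)=(c_\pi(x),y)$. *)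

theory Defs
  imports "HOL-Probability.Probability"
begin

definition P2 :: "('a::euclidean_space) measure set" where
  "P2 = {\<mu>. prob_space \<mu> \<and> sets \<mu> = sets borel \<and>
             integrable \<mu> (\<lambda>x. (norm x)\<^sup>2)}"

definition couplings :: "('a::euclidean_space) measure \<Rightarrow> 'a measure \<Rightarrow> ('a \<times> 'a) measure set" where
  "couplings \<mu> \<nu> = {\<pi>. prob_space \<pi> \<and> sets \<pi> = sets (borel \<Otimes>\<^sub>M borel) \<and>
                         distr \<pi> borel fst = \<mu> \<and> distr \<pi> borel snd = \<nu>}"

definition cost :: "(('a::euclidean_space) \<times> 'a) measure \<Rightarrow> ennreal" where
  "cost \<pi> = (\<integral>\<^sup>+ p. ennreal ((norm (fst p - snd p))\<^sup>2) \<partial>\<pi>)"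

definition W2sq :: "('a::euclidean_space) measure \<Rightarrow> 'a measure \<Rightarrow> ennreal" where
  "W2sq \<mu> \<nu> = (INF \<pi> \<in> couplings \<mu> \<nu>. cost \<pi>)"

text \<open>Martingale couplings: E[Y | X] = X, i.e. E[1_A(X) (Y - X)] = 0 for all Borel A.\<close>
definition mart_couplings :: "('a::euclidean_space) measure \<Rightarrow> 'a measure \<Rightarrow> ('a \<times> 'a) measure set" where
  "mart_couplings \<mu> \<nu> = {\<pi> \<in> couplings \<mu> \<nu>.
      integrable \<pi> snd \<and> integrable \<pi> fst \<and>
      (\<forall>A \<in> sets borel. (\<integral>p. indicator A (fst p) *\<^sub>R (snd p - fst p) \<partial>\<pi>) = 0)}"

definition disintegration ::
  "('a::euclidean_space) measure \<Rightarrow> ('a \<times> 'a) measure \<Rightarrow> ('a \<Rightarrow> 'a measure) \<Rightarrow> bool" where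
  "disintegration \<mu> \<pi> K \<longleftrightarrow>
     (\<forall>x. prob_space (K x) \<and> sets (K x) = sets borel) \<and>
     (\<forall>B \<in> sets borel. (\<lambda>x. emeasure (K x) B) \<in> borel_measurable borel) \<and>
     (\<forall>A \<in> sets borel. \<forall>B \<in> sets borel.
        emeasure \<pi> (A \<times> B) = (\<integral>\<^sup>+ x. indicator A x * emeasure (K x) B \<partial>\<mu>))"

text \<open>Conditional barycentric map c_pi(x) = integral of y d pi_x(y), and C_pi(x,y) = (c_pi x, y).\<close>
definition bary :: "('a::euclidean_space \<Rightarrow> 'a measure) \<Rightarrow> 'a \<Rightarrow> 'a" where
  "bary K x = (\<integral>y. y \<partial>(K x))"

definition Cmap :: "('a::euclidean_space \<Rightarrow> 'a measure) \<Rightarrow> 'a \<times> 'a \<Rightarrow> 'a \<times> 'a" where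
  "Cmap K p = (bary K (fst p), snd p)"

end

theory Submission
  imports Defs
begin

(* Write c for the barycentric map bary K. Disintegrating pi along mu, the cost of the image
   coupling (C_pi)_# pi is the double integral of |c x - y|^2 over K x and mu. Since the mean c x
   minimises y' |-> integral of |y' - y|^2 dK_x(y), this is at most cost pi = W2^2(mu, nu), which by
   minimality of mu lies below W2^2(mu', nu) for every mu' in D. Because c x is the mean of K x,
   (C_pi)_# pi is moreover a martingale coupling of c_# mu and nu. As martingale couplings are
   couplings, the value of (S) is at least that of (R), so the cost of (C_pi)_# pi is the optimal
   value of both problems. *)

lemma integral_bind_nonneg_real:
  fixes f :: "'b \<Rightarrow> real"
  assumes N[measurable]: "N \<in> M \<rightarrow>\<^sub>M subprob_algebra B" and M: "prob_space M"
    and f[measurable]: "f \<in> borel_measurable B" and nonneg: "\<And>x. 0 \<le> f x"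
    and int: "integrable (M \<bind> N) f"
  shows "AE x in M. integrable (N x) f"
    and "integrable M (\<lambda>x. \<integral>y. f y \<partial>N x)"
    and "integral\<^sup>L (M \<bind> N) f = (\<integral>x. \<integral>y. f y \<partial>N x \<partial>M)"
proof -
  interpret prob_space M by fact
  have fin: "(\<integral>\<^sup>+x. \<integral>\<^sup>+y. ennreal (f y) \<partial>N x \<partial>M) < \<infinity>"
    using int nn_integral_bind[of "\<lambda>y. ennreal (f y)" B, OF _ N]
    by (simp add: integrable_iff_bounded nonneg)
  have "AE x in M. (\<integral>\<^sup>+y. ennreal (f y) \<partial>N x) \<noteq> \<infinity>"
    by (rule nn_integral_PInf_AE) (use fin in auto)
  with AE_space show ae_int: "AE x in M. integrable (N x) f"
  proof eventually_elim
    case (elim x)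
    then have "sets (N x) = sets B" using sets_kernel[OF N] by simp
    then have "f \<in> borel_measurable (N x)" by (subst measurable_cong_sets) auto
    then show ?case
      using elim by (auto simp: integrable_iff_bounded nonneg less_top)
  qed
  have inner: "AE x in M. (\<integral>\<^sup>+y. ennreal (f y) \<partial>N x) = ennreal (\<integral>y. f y \<partial>N x)"
    using ae_int by eventually_elim (rule nn_integral_eq_integral, auto simp: nonneg)
  have outer_nonneg: "\<And>x. 0 \<le> (\<integral>y. f y \<partial>N x)" by (simp add: nonneg)
  have "(\<lambda>x. \<integral>y. f y \<partial>N x) \<in> borel_measurable M"
    by (rule measurable_compose[OF N integral_measurable_subprob_algebra[OF f]])
  moreover have "(\<integral>\<^sup>+x. ennreal (\<integral>y. f y \<partial>N x) \<partial>M) < \<infinity>"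
    using fin inner by (simp add: nn_integral_cong_AE)
  ultimately show outer_int: "integrable M (\<lambda>x. \<integral>y. f y \<partial>N x)"
    by (simp add: integrable_iff_bounded outer_nonneg)
  have "ennreal (integral\<^sup>L (M \<bind> N) f) = (\<integral>\<^sup>+y. ennreal (f y) \<partial>(M \<bind> N))"
    by (rule nn_integral_eq_integral[symmetric]) (use int nonneg in auto)
  also have "\<dots> = (\<integral>\<^sup>+x. \<integral>\<^sup>+y. ennreal (f y) \<partial>N x \<partial>M)"
    by (rule nn_integral_bind[OF _ N]) simp
  also have "\<dots> = (\<integral>\<^sup>+x. ennreal (\<integral>y. f y \<partial>N x) \<partial>M)"
    using inner by (simp add: nn_integral_cong_AE)
  also have "\<dots> = ennreal (\<integral>x. \<integral>y. f y \<partial>N x \<partial>M)"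
    by (rule nn_integral_eq_integral) (use outer_int outer_nonneg in auto)
  finally show "integral\<^sup>L (M \<bind> N) f = (\<integral>x. \<integral>y. f y \<partial>N x \<partial>M)"
    by (subst (asm) ennreal_inj) (auto simp: nonneg outer_nonneg intro!: integral_nonneg_AE)
qed

lemma integral_bind_real:
  fixes f :: "'b \<Rightarrow> real"
  assumes N[measurable]: "N \<in> M \<rightarrow>\<^sub>M subprob_algebra B" and M: "prob_space M"
    and f[measurable]: "f \<in> borel_measurable B"
    and int: "integrable (M \<bind> N) f"
  shows "AE x in M. integrable (N x) f"
    and "integrable M (\<lambda>x. \<integral>y. f y \<partial>N x)"
    and "integral\<^sup>L (M \<bind> N) f = (\<integral>x. \<integral>y. f y \<partial>N x \<partial>M)"
proof -
  interpret prob_space M by fact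
  define fp where "fp y = max (f y) 0" for y
  define fn where "fn y = max (- f y) 0" for y
  have split: "f = (\<lambda>y. fp y - fn y)" by (auto simp: fp_def fn_def)
  have fp_meas[measurable]: "fp \<in> borel_measurable B" and fn_meas[measurable]: "fn \<in> borel_measurable B"
    unfolding fp_def fn_def by measurable
  have nonneg: "0 \<le> fp y" "0 \<le> fn y" for y by (auto simp: fp_def fn_def)
  have [measurable_cong]: "sets (M \<bind> N) = sets B"
    using sets_bind[OF sets_kernel[OF N] not_empty] .
  have int_fp: "integrable (M \<bind> N) fp" and int_fn: "integrable (M \<bind> N) fn"
    using int unfolding fp_def fn_def by (auto intro!: integrable_max)
  note pos = integral_bind_nonneg_real[OF N M fp_meas nonneg(1) int_fp]
    and neg = integral_bind_nonneg_real[OF N M fn_meas nonneg(2) int_fn]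
  have inner: "AE x in M. integrable (N x) fp \<and> integrable (N x) fn"
    using pos(1) neg(1) by auto
  then show "AE x in M. integrable (N x) f"
    by eventually_elim (simp add: split)
  have inner_eq: "AE x in M. (\<integral>y. f y \<partial>N x) = (\<integral>y. fp y \<partial>N x) - (\<integral>y. fn y \<partial>N x)"
    using inner by eventually_elim (simp add: split)
  have outer_int: "integrable M (\<lambda>x. (\<integral>y. fp y \<partial>N x) - (\<integral>y. fn y \<partial>N x))"
    using pos(2) neg(2) by auto
  have "(\<lambda>x. \<integral>y. f y \<partial>N x) \<in> borel_measurable M"
    by (rule measurable_compose[OF N integral_measurable_subprob_algebra[OF f]])
  then show "integrable M (\<lambda>x. \<integral>y. f y \<partial>N x)"
    using integrable_cong_AE[OF _ borel_measurable_integrable[OF outer_int] inner_eq] outer_int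
    by blast
  have "integral\<^sup>L (M \<bind> N) f = integral\<^sup>L (M \<bind> N) fp - integral\<^sup>L (M \<bind> N) fn"
    unfolding split by (rule Bochner_Integration.integral_diff[OF int_fp int_fn])
  also have "\<dots> = (\<integral>x. (\<integral>y. fp y \<partial>N x) - (\<integral>y. fn y \<partial>N x) \<partial>M)"
    using pos neg by simp
  also have "\<dots> = (\<integral>x. \<integral>y. f y \<partial>N x \<partial>M)"
    using inner_eq by (intro integral_cong_AE) (auto simp: borel_measurable_integrable[OF outer_int])
  finally show "integral\<^sup>L (M \<bind> N) f = (\<integral>x. \<integral>y. f y \<partial>N x \<partial>M)" .
qed

lemma
  fixes M :: "'a::euclidean_space measure" and x :: 'a
  assumes "prob_space M" and [measurable_cong]: "sets M = sets borel"
    and sq_int: "integrable M (\<lambda>y. (norm (x - y))\<^sup>2)"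
  shows integrable_sq_dist_mean: "integrable M (\<lambda>y. (norm ((\<integral>z. z \<partial>M) - y))\<^sup>2)"
    and integral_sq_dist_eq:
      "(\<integral>y. (norm (x - y))\<^sup>2 \<partial>M)
         = (norm (x - (\<integral>z. z \<partial>M)))\<^sup>2 + (\<integral>y. (norm ((\<integral>z. z \<partial>M) - y))\<^sup>2 \<partial>M)"
proof -
  interpret prob_space M by fact
  define m where "m = (\<integral>z. z \<partial>M)"
  have "integrable M (\<lambda>y. norm (x - y))"
    using sq_int by (intro square_integrable_imp_integrable[of "\<lambda>y. norm (x - y)"]) auto
  then have "integrable M (\<lambda>y. x - y)"
    by (rule integrable_norm_cancel) simp
  then have "integrable M (\<lambda>y. x - (x - y))"
    by (rule Bochner_Integration.integrable_diff[OF integrable_const])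
  then have id_int: "integrable M (\<lambda>y. y)" by simp
  have dev_int: "integrable M (\<lambda>y. m - y)"
    by (intro Bochner_Integration.integrable_diff id_int integrable_const)
  have "(\<integral>y. m - y \<partial>M) = 0"
    using id_int by (simp add: Bochner_Integration.integral_diff prob_space m_def)
  then have cross: "(\<integral>y. (x - m) \<bullet> (m - y) \<partial>M) = 0"
    using dev_int by simp
  have cross_int: "integrable M (\<lambda>y. 2 * ((x - m) \<bullet> (m - y)))"
    using dev_int by (intro integrable_mult_right integrable_inner_right)
  have expand: "(norm (m - y))\<^sup>2 = (norm (x - y))\<^sup>2 - (norm (x - m))\<^sup>2 - 2 * ((x - m) \<bullet> (m - y))" for y
  proof -
    have "(norm ((x - m) + (m - y)))\<^sup>2 = (norm (x - m))\<^sup>2 + 2 * ((x - m) \<bullet> (m - y)) + (norm (m - y))\<^sup>2"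
      by (simp only: power2_norm_eq_inner inner_add_left inner_add_right
          inner_commute[of "m - y" "x - m"])
    then show ?thesis by simp
  qed
  show "integrable M (\<lambda>y. (norm ((\<integral>z. z \<partial>M) - y))\<^sup>2)"
    unfolding m_def[symmetric] expand
    by (intro Bochner_Integration.integrable_diff sq_int integrable_const cross_int)
  have "(\<integral>y. (norm (m - y))\<^sup>2 \<partial>M)
      = (\<integral>y. (norm (x - y))\<^sup>2 - (norm (x - m))\<^sup>2 \<partial>M) - (\<integral>y. 2 * ((x - m) \<bullet> (m - y)) \<partial>M)"
    unfolding expand
    by (intro Bochner_Integration.integral_diff Bochner_Integration.integrable_diff sq_int
        integrable_const cross_int)
  also have "\<dots> = (\<integral>y. (norm (x - y))\<^sup>2 \<partial>M) - (norm (x - m))\<^sup>2"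
    by (simp add: Bochner_Integration.integral_diff[OF sq_int integrable_const] cross prob_space)
  finally show "(\<integral>y. (norm (x - y))\<^sup>2 \<partial>M)
      = (norm (x - (\<integral>z. z \<partial>M)))\<^sup>2 + (\<integral>y. (norm ((\<integral>z. z \<partial>M) - y))\<^sup>2 \<partial>M)"
    by (simp add: m_def)
qed

lemma nn_integral_sq_dist_mean_le:
  fixes M :: "'a::euclidean_space measure" and x :: 'a
  assumes "prob_space M" and [measurable_cong]: "sets M = sets borel"
  shows "(\<integral>\<^sup>+y. ennreal ((norm ((\<integral>z. z \<partial>M) - y))\<^sup>2) \<partial>M) \<le> (\<integral>\<^sup>+y. ennreal ((norm (x - y))\<^sup>2) \<partial>M)"
proof (cases "(\<integral>\<^sup>+y. ennreal ((norm (x - y))\<^sup>2) \<partial>M) = \<infinity>")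
  case False
  then have sq_int: "integrable M (\<lambda>y. (norm (x - y))\<^sup>2)"
    by (auto simp: integrable_iff_bounded less_top)
  note mean_int = integrable_sq_dist_mean[OF assms sq_int]
  have "(\<integral>\<^sup>+y. ennreal ((norm ((\<integral>z. z \<partial>M) - y))\<^sup>2) \<partial>M)
      = ennreal (\<integral>y. (norm ((\<integral>z. z \<partial>M) - y))\<^sup>2 \<partial>M)"
    using mean_int by (intro nn_integral_eq_integral) auto
  also have "\<dots> \<le> ennreal (\<integral>y. (norm (x - y))\<^sup>2 \<partial>M)"
    unfolding integral_sq_dist_eq[OF assms sq_int] by (intro ennreal_leI) simp
  also have "\<dots> = (\<integral>\<^sup>+y. ennreal ((norm (x - y))\<^sup>2) \<partial>M)"
    using sq_int by (intro nn_integral_eq_integral[symmetric]) auto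
  finally show ?thesis .
qed simp

locale disintegrated_coupling =
  fixes \<mu> \<nu> :: "'a::euclidean_space measure" and \<pi> :: "('a \<times> 'a) measure"
    and K :: "'a \<Rightarrow> 'a measure"
  assumes coupling: "\<pi> \<in> couplings \<mu> \<nu>" and disint: "disintegration \<mu> \<pi> K"
begin

lemma prob_space_coupling: "prob_space \<pi>"
  and sets_coupling[measurable_cong]: "sets \<pi> = sets (borel \<Otimes>\<^sub>M borel)"
  and distr_fst_coupling: "distr \<pi> borel fst = \<mu>"
  and distr_snd_coupling: "distr \<pi> borel snd = \<nu>"
  using coupling unfolding couplings_def by auto

lemma prob_space_marginal: "prob_space \<mu>"
  using prob_space.prob_space_distr[OF prob_space_coupling, of fst borel] distr_fst_coupling
  by simp

lemma sets_marginal[measurable_cong]: "sets \<mu> = sets borel"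
  by (subst distr_fst_coupling[symmetric]) simp

lemma prob_space_K: "prob_space (K x)"
  and sets_K[measurable_cong]: "sets (K x) = sets borel"
  using disint unfolding disintegration_def by auto

lemma measurable_K[measurable]: "K \<in> borel \<rightarrow>\<^sub>M subprob_algebra borel"
  using disint unfolding disintegration_def
  by (intro measurable_subprob_algebra) (auto intro: prob_space_imp_subprob_space)

definition graph_K :: "'a \<Rightarrow> ('a \<times> 'a) measure" where
  "graph_K x = distr (K x) (borel \<Otimes>\<^sub>M borel) (Pair x)"

lemma measurable_graph_K[measurable]: "graph_K \<in> borel \<rightarrow>\<^sub>M subprob_algebra (borel \<Otimes>\<^sub>M borel)"
  unfolding graph_K_def by (rule measurable_distr2[OF _ measurable_K]) simp

lemma emeasure_graph_K_Times:
  assumes "A \<in> sets borel" and "B \<in> sets borel"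
  shows "emeasure (graph_K x) (A \<times> B) = indicator A x * emeasure (K x) B"
proof -
  have "emeasure (graph_K x) (A \<times> B) = emeasure (K x) (Pair x -` (A \<times> B) \<inter> space (K x))"
    unfolding graph_K_def using assms by (subst emeasure_distr) auto
  also have "\<dots> = indicator A x * emeasure (K x) B"
    using assms sets_eq_imp_space_eq[OF sets_K] by (auto simp: indicator_def)
  finally show ?thesis .
qed

lemma coupling_eq_bind: "\<pi> = \<mu> \<bind> graph_K"
proof -
  have not_empty: "space \<mu> \<noteq> {}" using prob_space.not_empty[OF prob_space_marginal] .
  have graph_K_meas: "graph_K \<in> \<mu> \<rightarrow>\<^sub>M subprob_algebra (borel \<Otimes>\<^sub>M borel)" by measurable
  let ?E = "{a \<times> b |a b. a \<in> sets (borel::'a measure) \<and> b \<in> sets (borel::'a measure)}"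
  show ?thesis
  proof (rule measure_eqI_generator_eq[OF Int_stable_pair_measure_generator[of borel borel]])
    show "?E \<subseteq> Pow (space (borel \<Otimes>\<^sub>M borel))" by (auto simp: space_pair_measure)
    show "sets \<pi> = sigma_sets (space (borel \<Otimes>\<^sub>M borel)) ?E"
      using sets_coupling by (simp add: sets_pair_measure space_pair_measure)
    show "sets (\<mu> \<bind> graph_K) = sigma_sets (space (borel \<Otimes>\<^sub>M borel)) ?E"
      using sets_bind[OF sets_kernel[OF graph_K_meas] not_empty]
      by (simp add: sets_pair_measure space_pair_measure)
    show "range (\<lambda>i. UNIV) \<subseteq> ?E" by (auto intro!: exI[of _ UNIV])
    show "(\<Union>i. UNIV) = space (borel \<Otimes>\<^sub>M borel)" by (simp add: space_pair_measure)
    show "emeasure \<pi> UNIV \<noteq> \<infinity>" for i :: nat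
      using prob_space.emeasure_space_1[OF prob_space_coupling] sets_eq_imp_space_eq[OF sets_coupling]
      by (simp add: space_pair_measure)
    fix X assume "X \<in> ?E"
    then obtain A B where X: "X = A \<times> B" "A \<in> sets borel" "B \<in> sets borel" by auto
    have "emeasure (\<mu> \<bind> graph_K) X = (\<integral>\<^sup>+ x. emeasure (graph_K x) X \<partial>\<mu>)"
      using X by (intro emeasure_bind[OF not_empty graph_K_meas]) auto
    also have "\<dots> = (\<integral>\<^sup>+ x. indicator A x * emeasure (K x) B \<partial>\<mu>)"
      using X by (simp add: emeasure_graph_K_Times)
    also have "\<dots> = emeasure \<pi> X" using disint X unfolding disintegration_def by auto
    finally show "emeasure \<pi> X = emeasure (\<mu> \<bind> graph_K) X" ..
  qed
qed

lemma nn_integral_coupling: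
  assumes [measurable]: "f \<in> borel_measurable (borel \<Otimes>\<^sub>M borel)"
  shows "(\<integral>\<^sup>+p. f p \<partial>\<pi>) = (\<integral>\<^sup>+x. \<integral>\<^sup>+y. f (x, y) \<partial>K x \<partial>\<mu>)"
proof -
  have "(\<integral>\<^sup>+p. f p \<partial>\<pi>) = (\<integral>\<^sup>+x. \<integral>\<^sup>+p. f p \<partial>graph_K x \<partial>\<mu>)"
    by (subst coupling_eq_bind) (rule nn_integral_bind[of _ "borel \<Otimes>\<^sub>M borel"]; measurable)
  also have "\<dots> = (\<integral>\<^sup>+x. \<integral>\<^sup>+y. f (x, y) \<partial>K x \<partial>\<mu>)"
    unfolding graph_K_def by (subst nn_integral_distr) auto
  finally show ?thesis .
qed

lemma
  fixes f :: "'a \<times> 'a \<Rightarrow> real"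
  assumes [measurable]: "f \<in> borel_measurable (borel \<Otimes>\<^sub>M borel)" and int: "integrable \<pi> f"
  shows AE_integrable_K: "AE x in \<mu>. integrable (K x) (\<lambda>y. f (x, y))"
    and integrable_integral_K: "integrable \<mu> (\<lambda>x. \<integral>y. f (x, y) \<partial>K x)"
    and integral_coupling: "integral\<^sup>L \<pi> f = (\<integral>x. \<integral>y. f (x, y) \<partial>K x \<partial>\<mu>)"
proof -
  have graph_K_meas: "graph_K \<in> \<mu> \<rightarrow>\<^sub>M subprob_algebra (borel \<Otimes>\<^sub>M borel)" by measurable
  have int_bind: "integrable (\<mu> \<bind> graph_K) f" using int coupling_eq_bind by simp
  have integrable_graph: "integrable (graph_K x) f = integrable (K x) (\<lambda>y. f (x, y))"
    and integral_graph: "(\<integral>p. f p \<partial>graph_K x) = (\<integral>y. f (x, y) \<partial>K x)" for x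
    unfolding graph_K_def by (auto intro!: integrable_distr_eq integral_distr)
  note bind = integral_bind_real[OF graph_K_meas prob_space_marginal _ int_bind]
  show "AE x in \<mu>. integrable (K x) (\<lambda>y. f (x, y))"
    using bind(1) by (simp add: integrable_graph)
  show "integrable \<mu> (\<lambda>x. \<integral>y. f (x, y) \<partial>K x)"
    using bind(2) by (simp add: integral_graph)
  show "integral\<^sup>L \<pi> f = (\<integral>x. \<integral>y. f (x, y) \<partial>K x \<partial>\<mu>)"
    using bind(3) coupling_eq_bind by (simp add: integral_graph)
qed

lemma integral_coupling_eq_0:
  fixes g :: "'a \<times> 'a \<Rightarrow> 'b::euclidean_space"
  assumes [measurable]: "g \<in> borel_measurable (borel \<Otimes>\<^sub>M borel)" and int: "integrable \<pi> g"
    and fibers: "AE x in \<mu>. integrable (K x) (\<lambda>y. g (x, y)) \<and> (\<integral>y. g (x, y) \<partial>K x) = 0"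
  shows "(\<integral>p. g p \<partial>\<pi>) = 0"
proof (rule euclidean_eqI)
  fix b :: 'b
  have "(\<integral>p. g p \<partial>\<pi>) \<bullet> b = (\<integral>p. g p \<bullet> b \<partial>\<pi>)"
    using int by simp
  also have "\<dots> = (\<integral>x. \<integral>y. g (x, y) \<bullet> b \<partial>K x \<partial>\<mu>)"
    using int by (intro integral_coupling) auto
  also have "\<dots> = 0"
  proof (rule integral_eq_zero_AE)
    show "AE x in \<mu>. (\<integral>y. g (x, y) \<bullet> b \<partial>K x) = 0"
      using fibers by eventually_elim simp
  qed
  finally show "(\<integral>p. g p \<partial>\<pi>) \<bullet> b = 0 \<bullet> b" by simp
qed

lemma measurable_bary[measurable]: "bary K \<in> borel_measurable borel"
proof -
  have "bary K = (\<lambda>x. \<integral>y. y \<partial>K x)" by (rule ext) (simp add: bary_def)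
  then show ?thesis
    by (simp add: measurable_compose[OF measurable_K integral_measurable_subprob_algebra])
qed

lemma Cmap_eq: "Cmap K = (\<lambda>p. (bary K (fst p), snd p))"
  by (rule ext) (simp add: Cmap_def)

lemma measurable_Cmap[measurable]: "Cmap K \<in> borel \<Otimes>\<^sub>M borel \<rightarrow>\<^sub>M borel \<Otimes>\<^sub>M borel"
  unfolding Cmap_eq by measurable

lemma couplings_Cmap:
  "distr \<pi> (borel \<Otimes>\<^sub>M borel) (Cmap K) \<in> couplings (distr \<mu> borel (bary K)) \<nu>"
proof -
  have "distr (distr \<pi> (borel \<Otimes>\<^sub>M borel) (Cmap K)) borel fst = distr \<pi> borel (bary K \<circ> fst)"
    by (subst distr_distr) (auto simp: Cmap_eq comp_def)
  also have "\<dots> = distr (distr \<pi> borel fst) borel (bary K)"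
    by (rule distr_distr[symmetric]) auto
  also have "\<dots> = distr \<mu> borel (bary K)"
    by (simp add: distr_fst_coupling)
  finally have "distr (distr \<pi> (borel \<Otimes>\<^sub>M borel) (Cmap K)) borel fst = distr \<mu> borel (bary K)" .
  moreover have "distr (distr \<pi> (borel \<Otimes>\<^sub>M borel) (Cmap K)) borel snd = \<nu>"
    by (subst distr_distr) (auto simp: Cmap_eq comp_def distr_snd_coupling)
  moreover have "prob_space (distr \<pi> (borel \<Otimes>\<^sub>M borel) (Cmap K))"
    by (rule prob_space.prob_space_distr[OF prob_space_coupling]) simp
  ultimately show ?thesis unfolding couplings_def by simp
qed

lemma cost_Cmap_le: "cost (distr \<pi> (borel \<Otimes>\<^sub>M borel) (Cmap K)) \<le> cost \<pi>"
proof -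
  have "cost (distr \<pi> (borel \<Otimes>\<^sub>M borel) (Cmap K))
      = (\<integral>\<^sup>+x. \<integral>\<^sup>+y. ennreal ((norm (bary K x - y))\<^sup>2) \<partial>K x \<partial>\<mu>)"
    unfolding cost_def by (simp add: nn_integral_distr nn_integral_coupling Cmap_eq)
  also have "\<dots> \<le> (\<integral>\<^sup>+x. \<integral>\<^sup>+y. ennreal ((norm (x - y))\<^sup>2) \<partial>K x \<partial>\<mu>)"
  proof (rule nn_integral_mono)
    fix x
    show "(\<integral>\<^sup>+y. ennreal ((norm (bary K x - y))\<^sup>2) \<partial>K x) \<le> (\<integral>\<^sup>+y. ennreal ((norm (x - y))\<^sup>2) \<partial>K x)"
      unfolding bary_def by (rule nn_integral_sq_dist_mean_le[OF prob_space_K sets_K])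
  qed
  also have "\<dots> = cost \<pi>"
    unfolding cost_def by (simp add: nn_integral_coupling)
  finally show ?thesis .
qed

context
  assumes integrable_\<nu>: "integrable \<nu> (\<lambda>y. y)"
begin

lemma integrable_snd_coupling: "integrable \<pi> snd"
proof -
  have "integrable (distr \<pi> borel snd) (\<lambda>y. y)"
    using integrable_\<nu> by (simp add: distr_snd_coupling)
  then show ?thesis by (subst (asm) integrable_distr_eq) auto
qed

lemma AE_integrable_K_id: "AE x in \<mu>. integrable (K x) (\<lambda>y. y)"
  using AE_integrable_K[of "\<lambda>p. norm (snd p)"] integrable_snd_coupling
  by (auto simp: integrable_norm_iff)

lemma integrable_bary: "integrable \<mu> (bary K)"
proof (rule Bochner_Integration.integrable_bound)
  show "integrable \<mu> (\<lambda>x. \<integral>y. norm y \<partial>K x)"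
    using integrable_integral_K[of "\<lambda>p. norm (snd p)"] integrable_snd_coupling by simp
  show "AE x in \<mu>. norm (bary K x) \<le> norm (\<integral>y. norm y \<partial>K x)"
    by (auto simp: bary_def intro!: AE_I2 integral_norm_bound)
qed simp

lemma integrable_bary_fst: "integrable \<pi> (\<lambda>p. bary K (fst p))"
proof -
  have "integrable (distr \<pi> borel fst) (bary K)"
    using integrable_bary by (simp add: distr_fst_coupling)
  then show ?thesis by (subst (asm) integrable_distr_eq) auto
qed

lemma integral_increment_Cmap:
  assumes [measurable]: "A \<in> sets borel"
  shows "(\<integral>p. indicator A (fst p) *\<^sub>R (snd p - fst p) \<partial>distr \<pi> (borel \<Otimes>\<^sub>M borel) (Cmap K)) = 0"
proof -
  define g where "g p = indicator A (bary K (fst p)) *\<^sub>R (snd p - bary K (fst p))" for p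
  have g_meas[measurable]: "g \<in> borel_measurable (borel \<Otimes>\<^sub>M borel)"
    unfolding g_def by measurable
  have g_int: "integrable \<pi> g"
  proof (rule Bochner_Integration.integrable_bound)
    show "integrable \<pi> (\<lambda>p. snd p - bary K (fst p))"
      using integrable_snd_coupling integrable_bary_fst by auto
    show "AE p in \<pi>. norm (g p) \<le> norm (snd p - bary K (fst p))"
      by (auto simp: g_def indicator_def)
  qed simp
  have "AE x in \<mu>. integrable (K x) (\<lambda>y. g (x, y)) \<and> (\<integral>y. g (x, y) \<partial>K x) = 0"
    using AE_integrable_K_id
  proof eventually_elim
    case (elim x)
    interpret K: prob_space "K x" by (rule prob_space_K)
    have "integrable (K x) (\<lambda>y. y - bary K x)"
      using elim by (rule Bochner_Integration.integrable_diff[OF _ K.integrable_const])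
    moreover have "(\<integral>y. y - bary K x \<partial>K x) = 0"
      by (simp add: Bochner_Integration.integral_diff[OF elim K.integrable_const] K.prob_space bary_def)
    ultimately show ?case by (simp add: g_def)
  qed
  then have g_zero: "(\<integral>p. g p \<partial>\<pi>) = 0"
    by (rule integral_coupling_eq_0[OF g_meas g_int])
  have "(\<integral>p. indicator A (fst p) *\<^sub>R (snd p - fst p) \<partial>distr \<pi> (borel \<Otimes>\<^sub>M borel) (Cmap K))
      = (\<integral>p. indicator A (fst (Cmap K p)) *\<^sub>R (snd (Cmap K p) - fst (Cmap K p)) \<partial>\<pi>)"
    by (rule integral_distr) measurable
  also have "\<dots> = (\<integral>p. g p \<partial>\<pi>)" by (simp add: g_def Cmap_def)
  also have "\<dots> = 0" by (rule g_zero)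
  finally show ?thesis .
qed

lemma mart_couplings_Cmap:
  "distr \<pi> (borel \<Otimes>\<^sub>M borel) (Cmap K) \<in> mart_couplings (distr \<mu> borel (bary K)) \<nu>"
proof -
  have "integrable (distr \<pi> (borel \<Otimes>\<^sub>M borel) (Cmap K)) snd"
    using integrable_snd_coupling by (subst integrable_distr_eq) (auto simp: Cmap_eq)
  moreover have "integrable (distr \<pi> (borel \<Otimes>\<^sub>M borel) (Cmap K)) fst"
    using integrable_bary_fst by (subst integrable_distr_eq) (auto simp: Cmap_eq)
  ultimately show ?thesis
    by (simp add: mart_couplings_def couplings_Cmap integral_increment_Cmap)
qed

end

end

lemma integrable_ident_P2:
  assumes "\<mu> \<in> P2"
  shows "integrable \<mu> (\<lambda>x. x)"
proof -
  interpret prob_space \<mu> using assms by (simp add: P2_def)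
  have [measurable_cong]: "sets \<mu> = sets borel" using assms by (simp add: P2_def)
  have "integrable \<mu> (\<lambda>x. norm x)"
    using assms by (intro square_integrable_imp_integrable[of norm]) (auto simp: P2_def)
  then show ?thesis by (rule integrable_norm_cancel) simp
qed

lemma W2sq_le_cost: "\<pi> \<in> couplings \<mu> \<nu> \<Longrightarrow> W2sq \<mu> \<nu> \<le> cost \<pi>"
  unfolding W2sq_def by (rule INF_lower)

lemma W2sq_le_cost_mart: "\<pi> \<in> mart_couplings \<mu> \<nu> \<Longrightarrow> W2sq \<mu> \<nu> \<le> cost \<pi>"
  by (rule W2sq_le_cost) (simp add: mart_couplings_def)

theorem mainTheorem1:
  fixes \<nu> \<mu> :: "'a::euclidean_space measure"
    and D :: "'a measure set"
    and \<pi> :: "('a \<times> 'a) measure"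
    and K :: "'a \<Rightarrow> 'a measure"
  assumes "\<nu> \<in> P2"
    and "D \<subseteq> P2"
    and "\<mu> \<in> D"
    and "\<forall>\<mu>' \<in> D. W2sq \<mu> \<nu> \<le> W2sq \<mu>' \<nu>"
    and "\<pi> \<in> couplings \<mu> \<nu>"
    and "cost \<pi> = W2sq \<mu> \<nu>"
    and "disintegration \<mu> \<pi> K"
    and "distr \<mu> borel (bary K) \<in> D"
  shows "(\<forall>\<mu>' \<in> D. W2sq (distr \<mu> borel (bary K)) \<nu> \<le> W2sq \<mu>' \<nu>)
     \<and> distr \<pi> (borel \<Otimes>\<^sub>M borel) (Cmap K) \<in> mart_couplings (distr \<mu> borel (bary K)) \<nu>
     \<and> (\<forall>\<mu>' \<in> D. \<forall>\<rho> \<in> mart_couplings \<mu>' \<nu>.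
           cost (distr \<pi> (borel \<Otimes>\<^sub>M borel) (Cmap K)) \<le> cost \<rho>)
     \<and> (INF \<mu>' \<in> D. W2sq \<mu>' \<nu>) = (INF \<mu>' \<in> D. INF \<rho> \<in> mart_couplings \<mu>' \<nu>. cost \<rho>)"
proof -
  interpret disintegrated_coupling \<mu> \<nu> \<pi> K using assms(5,7) by unfold_locales
  let ?\<mu>c = "distr \<mu> borel (bary K)" and ?\<pi>c = "distr \<pi> (borel \<Otimes>\<^sub>M borel) (Cmap K)"
  have mart: "?\<pi>c \<in> mart_couplings ?\<mu>c \<nu>"
    using mart_couplings_Cmap integrable_ident_P2[OF assms(1)] .
  have cost_le: "cost ?\<pi>c \<le> W2sq \<mu>' \<nu>" if "\<mu>' \<in> D" for \<mu>'
    using cost_Cmap_le assms(4,6) that by (metis order_trans)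
  have opt_R: "\<forall>\<mu>' \<in> D. W2sq ?\<mu>c \<nu> \<le> W2sq \<mu>' \<nu>"
    using W2sq_le_cost[OF couplings_Cmap] cost_le by (blast intro: order_trans)
  have opt_S: "\<forall>\<mu>' \<in> D. \<forall>\<rho> \<in> mart_couplings \<mu>' \<nu>. cost ?\<pi>c \<le> cost \<rho>"
    using cost_le W2sq_le_cost_mart by (blast intro: order_trans)
  have "(INF \<mu>' \<in> D. W2sq \<mu>' \<nu>) \<le> (INF \<mu>' \<in> D. INF \<rho> \<in> mart_couplings \<mu>' \<nu>. cost \<rho>)"
    by (rule INF_mono) (blast intro: INF_greatest W2sq_le_cost_mart)
  moreover have "(INF \<mu>' \<in> D. INF \<rho> \<in> mart_couplings \<mu>' \<nu>. cost \<rho>) \<le> cost ?\<pi>c"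
    using assms(8) mart by (blast intro: INF_lower2)
  moreover have "\<dots> \<le> (INF \<mu>' \<in> D. W2sq \<mu>' \<nu>)"
    using cost_le by (rule INF_greatest)
  ultimately have "(INF \<mu>' \<in> D. W2sq \<mu>' \<nu>) = (INF \<mu>' \<in> D. INF \<rho> \<in> mart_couplings \<mu>' \<nu>. cost \<rho>)"
    by (blast intro: antisym order_trans)
  with opt_R mart opt_S show ?thesis by blast
qed

end
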